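(* Suppose $(\hat{\mathbf{x}},\hat{\mathbf{z}},\boldsymbol{\tau}_x,\boldsymbol{\tau}_p)$ is a solution to the optimization $$\min_{\bar{\mathbf{x}},\bar{\mathbf{z}},\bar{\boldsymbol{\tau}}_x,\bar{\boldsymbol{\tau}}_p} F_{\rm SP}(\bar{\mathbf{x}},\bar{\mathbf{z}},\bar{\boldsymbol{\tau}}_x,\bar{\boldsymbol{\tau}}_p)\quad\text{s.t. } \bar{\mathbf{z}}=\mathbf{A}\bar{\mathbf{x}},\ \bar{\boldsymbol{\tau}}_p=\mathbf{S}\bar{\boldsymbol{\tau}}_x. \qquad (\ast)$$ Then this $\boldsymbol{\tau}_p$, together with the densities $(\hat b_x,\hat b_z)$ attaining the minima defining $F^x_{\rm SP}(\hat{\mathbf{x}},\boldsymbol{\tau}_x)$ and $F^z_{\rm SP}(\hat{\mathbf{z}},\boldsymbol{\tau}_p)$, is a minimizer of the variational optimization $$\min_{b_x,b_z,\bar{\boldsymbol{\tau}}_p} J_{\rm SP}(b_x,b_z,\bar{\boldsymbol{\tau}}_p)\quad\text{s.t. } \mathbb{E}(\mathbf{z}|b_z)=\mathbf{A}\,\mathbb{E}(\mathbf{x}|b_x),\ \ \bar{\boldsymbol{\tau}}_p=\mathbf{S}\,\mathrm{var}(\mathbf{x}|b_x). \qquad (\ast\ast)$$ Conversely, given any solution $(\hat b_x,\hat b_z,\boldsymbol{\tau}_p)$ of $(\ast\ast)$, the vectors $\hat{\mathbf{x}}=\mathbb{E}(\mathbf{x}|\hat b_x)$, $\boldsymbol{\tau}_x=\mathrm{var}(\mathbf{x}|\hat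 b_x)$, $\hat{\mathbf{z}}=\mathbb{E}(\mathbf{z}|\hat b_z)$, $\boldsymbol{\tau}_p=\mathbf{S}\boldsymbol{\tau}_x$ together are a solution to $(\ast)$.
   Context: $\mathbf{A}\in\mathbb{R}^{m\times n}$, $\mathbf{S}:=|\mathbf{A}|^2$ (entrywise squared magnitude). $f_x(\mathbf{x})=\sum_{j=1}^n f_{x_j}(x_j)$, $f_z(\mathbf{z})=\sum_{i=1}^m f_{z_i}(z_i)$. Densities $b_x$ on $\mathbb{R}^n$ and $b_z$ on $\mathbb{R}^m$ range over factorizable (product) densities $b_x=\prod_j b_{x_j}$, $b_z=\prod_i b_{z_i}$. $\mathbb{E}(\cdot|b)$ denotes the mean vector and $\mathrm{var}(\cdot|b)$ the vector of componentwise variances (not a covariance matrix). $D(b\|e^{-f}):=\int b\log(b/e^{-f})$. For positive $\bar{\boldsymbol{\tau}}_p$, $H_{\rm gauss}(b_z,\bar{\boldsymbol{\tau}}_p):=\sum_{i=1}^m\big[\frac{1}{2\bar\tau_{p_i}}\mathrm{var}(z_i|b_{z_i})+\frac12\log(2\pi\bar\tau_{p_i})\big]$ and $J_{\rm SP}(b_x,b_z,\bar{\boldsymbol{\tau}}_p):=D(b_x\|e^{-f_x})+D(b_z\|e^{-f_z})+H_{\rm gauss}(b_z,\bar{\boldsymbol{\tau}}_p)$. Further, $F^x_{\rm SP}(\bar{\mathbf{x}},\bar{\boldsymbol{\tau}}_x):=\min_{b_x}D(b_x\|e^{-f_x})$ s.t. $\mathbb{E}(\mathbf{x}|b_x)=\bar{\mathbf{x}}$,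 $\mathrm{var}(\mathbf{x}|b_x)=\bar{\boldsymbol{\tau}}_x$; $F^z_{\rm SP}(\bar{\mathbf{z}},\bar{\boldsymbol{\tau}}_p):=\min_{b_z}\big[D(b_z\|e^{-f_z})+H_{\rm gauss}(b_z,\bar{\boldsymbol{\tau}}_p)\big]$ s.t. $\mathbb{E}(\mathbf{z}|b_z)=\bar{\mathbf{z}}$; $F_{\rm SP}(\bar{\mathbf{x}},\bar{\mathbf{z}},\bar{\boldsymbol{\tau}}_x,\bar{\boldsymbol{\tau}}_p):=F^x_{\rm SP}(\bar{\mathbf{x}},\bar{\boldsymbol{\tau}}_x)+F^z_{\rm SP}(\bar{\mathbf{z}},\bar{\boldsymbol{\tau}}_p)$. *)

theory Defs
  imports "HOL-Analysis.Analysis"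
begin

text \<open>A factorizable density on real^'k is given by its family of one-dimensional factors.\<close>

definition prod_dens :: "('k::finite \<Rightarrow> real \<Rightarrow> real) \<Rightarrow> real^'k \<Rightarrow> real" where
  "prod_dens b x = (\<Prod>j\<in>UNIV. b j (x $ j))"

definition sep_fun :: "('k::finite \<Rightarrow> real \<Rightarrow> real) \<Rightarrow> real^'k \<Rightarrow> real" where
  "sep_fun f x = (\<Sum>j\<in>UNIV. f j (x $ j))"

definition factor_densities :: "('k::finite \<Rightarrow> real \<Rightarrow> real) \<Rightarrow> bool" where
  "factor_densities b \<longleftrightarrow> (\<forall>j. b j \<in> borel_measurable lborel \<and> (\<forall>t. 0 \<le> b j t)
      \<and> integrable lborel (b j) \<and> (LINT t|lborel. b j t) = 1)"

definition KL :: "('k::finite \<Rightarrow> real \<Rightarrow> real) \<Rightarrow> ('k \<Rightarrow> real \<Rightarrow> real) \<Rightarrow> real" where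
  "KL f b = (LINT x|lborel. prod_dens b x * ln (prod_dens b x / exp (- sep_fun f x)))"

definition admissible :: "('k::finite \<Rightarrow> real \<Rightarrow> real) \<Rightarrow> ('k \<Rightarrow> real \<Rightarrow> real) \<Rightarrow> bool" where
  "admissible f b \<longleftrightarrow> factor_densities b
     \<and> (\<forall>j. integrable lborel (\<lambda>x. x $ j * prod_dens b x))
     \<and> (\<forall>j. integrable lborel (\<lambda>x. (x $ j)^2 * prod_dens b x))
     \<and> integrable lborel (\<lambda>x. prod_dens b x * ln (prod_dens b x / exp (- sep_fun f x)))"

definition mean_vec :: "('k::finite \<Rightarrow> real \<Rightarrow> real) \<Rightarrow> real^'k" where
  "mean_vec b = (\<chi> j. LINT x|lborel. x $ j * prod_dens b x)"

definition var_vec :: "('k::finite \<Rightarrow> real \<Rightarrow> real) \<Rightarrow> real^'k" where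
  "var_vec b = (\<chi> j. LINT x|lborel. (x $ j - mean_vec b $ j)^2 * prod_dens b x)"

definition H_gauss :: "('m::finite \<Rightarrow> real \<Rightarrow> real) \<Rightarrow> real^'m \<Rightarrow> real" where
  "H_gauss bz tp = (\<Sum>i\<in>UNIV. var_vec bz $ i / (2 * tp $ i) + ln (2 * pi * tp $ i) / 2)"

definition J_SP :: "('n::finite \<Rightarrow> real \<Rightarrow> real) \<Rightarrow> ('m::finite \<Rightarrow> real \<Rightarrow> real)
    \<Rightarrow> ('n \<Rightarrow> real \<Rightarrow> real) \<Rightarrow> ('m \<Rightarrow> real \<Rightarrow> real) \<Rightarrow> real^'m \<Rightarrow> real" where
  "J_SP fx fz bx bz tp = KL fx bx + KL fz bz + H_gauss bz tp"

text \<open>Minima written as infima in the extended reals (value \<infinity> if infeasible).\<close>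
definition Fx_SP :: "('n::finite \<Rightarrow> real \<Rightarrow> real) \<Rightarrow> real^'n \<Rightarrow> real^'n \<Rightarrow> ereal" where
  "Fx_SP fx xb tx = (INF b \<in> {b. admissible fx b \<and> mean_vec b = xb \<and> var_vec b = tx}. ereal (KL fx b))"

definition Fz_SP :: "('m::finite \<Rightarrow> real \<Rightarrow> real) \<Rightarrow> real^'m \<Rightarrow> real^'m \<Rightarrow> ereal" where
  "Fz_SP fz zb tp = (INF b \<in> {b. admissible fz b \<and> mean_vec b = zb}. ereal (KL fz b + H_gauss b tp))"

definition F_SP :: "('n::finite \<Rightarrow> real \<Rightarrow> real) \<Rightarrow> ('m::finite \<Rightarrow> real \<Rightarrow> real)
    \<Rightarrow> real^'n \<Rightarrow> real^'m \<Rightarrow> real^'n \<Rightarrow> real^'m \<Rightarrow> ereal" where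
  "F_SP fx fz xb zb tx tp = Fx_SP fx xb tx + Fz_SP fz zb tp"

text \<open>S = |A|^2 entrywise.\<close>
definition sq_mat :: "real^'n^'m \<Rightarrow> real^'n^'m" where
  "sq_mat A = (\<chi> i j. (A $ i $ j)^2)"

text \<open>Feasible set of problem (*) (tau_p required positive so that H_gauss is defined).\<close>
definition feas_star :: "real^'n^'m \<Rightarrow> real^'n \<Rightarrow> real^'m \<Rightarrow> real^'n \<Rightarrow> real^'m \<Rightarrow> bool" where
  "feas_star A xb zb tx tp \<longleftrightarrow> zb = A *v xb \<and> tp = sq_mat A *v tx \<and> (\<forall>i. 0 < tp $ i)"

definition feas_var :: "real^'n^'m \<Rightarrow> ('n::finite \<Rightarrow> real \<Rightarrow> real) \<Rightarrow> ('m::finite \<Rightarrow> real \<Rightarrow> real)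
    \<Rightarrow> ('n \<Rightarrow> real \<Rightarrow> real) \<Rightarrow> ('m \<Rightarrow> real \<Rightarrow> real) \<Rightarrow> real^'m \<Rightarrow> bool" where
  "feas_var A fx fz bx bz tp \<longleftrightarrow> admissible fx bx \<and> admissible fz bz
     \<and> mean_vec bz = A *v mean_vec bx \<and> tp = sq_mat A *v var_vec bx \<and> (\<forall>i. 0 < tp $ i)"

end

theory Submission
  imports Defs
begin

text \<open>Both problems have the same value: for fixed moment constraints, minimising
  \<open>J_SP\<close> over the densities separates into the two minimisations defining \<open>F_SP\<close>, and
  the constraints of the variational problem only involve the densities through
  their means and variances.  So every feasible point of one problem is dominated by
  a feasible point of the other with the same objective value.\<close>

lemma ereal_le_INF_add_INF:
  fixes J :: real and f :: "'a \<Rightarrow> real" and g :: "'b \<Rightarrow> real"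
  assumes le: "\<And>a b. a \<in> X \<Longrightarrow> b \<in> Z \<Longrightarrow> J \<le> f a + g b"
  shows "ereal J \<le> (INF a\<in>X. ereal (f a)) + (INF b\<in>Z. ereal (g b))"
proof (cases "X = {} \<or> (INF b\<in>Z. ereal (g b)) = \<infinity>")
  case True
  then show ?thesis by (auto simp: top_ereal_def)
next
  case False
  then obtain a0 where a0: "a0 \<in> X" and fin: "(INF b\<in>Z. ereal (g b)) \<noteq> \<infinity>" by auto
  have le_Z: "ereal (J - f a) \<le> (INF b\<in>Z. ereal (g b))" if "a \<in> X" for a
    by (rule INF_greatest) (use le[OF that] in \<open>fastforce simp: algebra_simps\<close>)
  from le_Z[OF a0] fin obtain c where c: "(INF b\<in>Z. ereal (g b)) = ereal c"
    by (cases "(INF b\<in>Z. ereal (g b))") auto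
  have "ereal (J - c) \<le> (INF a\<in>X. ereal (f a))"
  proof (rule INF_greatest)
    fix a assume "a \<in> X"
    with le_Z[of a] c show "ereal (J - c) \<le> ereal (f a)" by simp
  qed
  then show ?thesis
    unfolding c by (cases "(INF a\<in>X. ereal (f a))") auto
qed

lemma feas_var_iff_feas_star:
  "feas_var A fx fz bx bz tp \<longleftrightarrow> admissible fx bx \<and> admissible fz bz
     \<and> feas_star A (mean_vec bx) (mean_vec bz) (var_vec bx) tp"
  unfolding feas_var_def feas_star_def by auto

lemma ereal_J_SP:
  "ereal (J_SP fx fz bx bz tp) = ereal (KL fx bx) + ereal (KL fz bz + H_gauss bz tp)"
  by (simp add: J_SP_def add.assoc)

lemma F_SP_le_J_SP:
  assumes "admissible fx bx" and "admissible fz bz"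
  shows "F_SP fx fz (mean_vec bx) (mean_vec bz) (var_vec bx) tp \<le> J_SP fx fz bx bz tp"
  unfolding ereal_J_SP F_SP_def Fx_SP_def Fz_SP_def
  by (rule add_mono; rule INF_lower) (use assms in auto)

lemma F_SP_eq_J_SP_if_attained:
  assumes "ereal (KL fx bx) = Fx_SP fx xh tx" and "ereal (KL fz bz + H_gauss bz tp) = Fz_SP fz zh tp"
  shows "F_SP fx fz xh zh tx tp = J_SP fx fz bx bz tp"
  unfolding ereal_J_SP F_SP_def assms ..

lemma ereal_le_F_SP:
  assumes "\<And>bx bz. admissible fx bx \<Longrightarrow> mean_vec bx = xb \<Longrightarrow> var_vec bx = tx
      \<Longrightarrow> admissible fz bz \<Longrightarrow> mean_vec bz = zb \<Longrightarrow> J \<le> J_SP fx fz bx bz tp"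
  shows "ereal J \<le> F_SP fx fz xb zb tx tp"
  unfolding F_SP_def Fx_SP_def Fz_SP_def
  by (rule ereal_le_INF_add_INF) (use assms in \<open>auto simp: J_SP_def add.assoc\<close>)

lemma J_SP_minimal_if_F_SP_minimal:
  assumes min_F: "\<And>xb zb txb tpb. feas_star A xb zb txb tpb \<Longrightarrow>
              F_SP fx fz xh zh tx tp \<le> F_SP fx fz xb zb txb tpb"
    and attained: "F_SP fx fz xh zh tx tp = J_SP fx fz bx bz tp"
    and feas: "feas_var A fx fz bx' bz' tp'"
  shows "J_SP fx fz bx bz tp \<le> J_SP fx fz bx' bz' tp'"
proof -
  have "ereal (J_SP fx fz bx bz tp) \<le> F_SP fx fz (mean_vec bx') (mean_vec bz') (var_vec bx') tp'"
    using min_F feas attained by (simp add: feas_var_iff_feas_star)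
  also have "\<dots> \<le> J_SP fx fz bx' bz' tp'"
    using feas by (simp add: feas_var_iff_feas_star F_SP_le_J_SP)
  finally show ?thesis by simp
qed

lemma F_SP_minimal_if_J_SP_minimal:
  assumes min_J: "\<And>bx' bz' tp'. feas_var A fx fz bx' bz' tp' \<Longrightarrow>
              J_SP fx fz bx bz tp \<le> J_SP fx fz bx' bz' tp'"
    and feas: "feas_var A fx fz bx bz tp" and feas_star: "feas_star A xb zb txb tpb"
  shows "F_SP fx fz (mean_vec bx) (mean_vec bz) (var_vec bx) tp \<le> F_SP fx fz xb zb txb tpb"
proof -
  have "F_SP fx fz (mean_vec bx) (mean_vec bz) (var_vec bx) tp \<le> J_SP fx fz bx bz tp"
    using feas by (simp add: feas_var_iff_feas_star F_SP_le_J_SP)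
  also have "\<dots> \<le> F_SP fx fz xb zb txb tpb"
    by (rule ereal_le_F_SP, rule min_J) (use feas_star in \<open>auto simp: feas_var_iff_feas_star\<close>)
  finally show ?thesis .
qed

theorem lemma2:
  fixes A :: "real^'n::finite^'m::finite"
    and fx :: "'n \<Rightarrow> real \<Rightarrow> real" and fz :: "'m \<Rightarrow> real \<Rightarrow> real"
  shows
   "(\<forall>xh zh tx tp bx bz.
       (feas_star A xh zh tx tp
        \<and> (\<forall>xb zb txb tpb. feas_star A xb zb txb tpb \<longrightarrow>
              F_SP fx fz xh zh tx tp \<le> F_SP fx fz xb zb txb tpb))
       \<and> (admissible fx bx \<and> mean_vec bx = xh \<and> var_vec bx = tx
          \<and> ereal (KL fx bx) = Fx_SP fx xh tx)
       \<and> (admissible fz bz \<and> mean_vec bz = zh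
          \<and> ereal (KL fz bz + H_gauss bz tp) = Fz_SP fz zh tp)
       \<longrightarrow> feas_var A fx fz bx bz tp
           \<and> (\<forall>bx' bz' tp'. feas_var A fx fz bx' bz' tp' \<longrightarrow>
                 J_SP fx fz bx bz tp \<le> J_SP fx fz bx' bz' tp'))
    \<and>
    (\<forall>bx bz tp.
       feas_var A fx fz bx bz tp
       \<and> (\<forall>bx' bz' tp'. feas_var A fx fz bx' bz' tp' \<longrightarrow>
              J_SP fx fz bx bz tp \<le> J_SP fx fz bx' bz' tp')
       \<longrightarrow> feas_star A (mean_vec bx) (mean_vec bz) (var_vec bx) tp
           \<and> tp = sq_mat A *v var_vec bx
           \<and> (\<forall>xb zb txb tpb. feas_star A xb zb txb tpb \<longrightarrow>
                 F_SP fx fz (mean_vec bx) (mean_vec bz) (var_vec bx) tp \<le> F_SP fx fz xb zb txb tpb))"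
proof (intro conjI allI impI; elim conjE)
  fix xh zh tx tp bx bz
  assume "feas_star A xh zh tx tp" "admissible fx bx" "admissible fz bz"
    "mean_vec bx = xh" "var_vec bx = tx" "mean_vec bz = zh"
  then show "feas_var A fx fz bx bz tp"
    by (simp add: feas_var_iff_feas_star)
next
  fix xh zh tx tp bx bz bx' bz' tp'
  assume "\<forall>xb zb txb tpb. feas_star A xb zb txb tpb \<longrightarrow>
              F_SP fx fz xh zh tx tp \<le> F_SP fx fz xb zb txb tpb"
    "ereal (KL fx bx) = Fx_SP fx xh tx" "ereal (KL fz bz + H_gauss bz tp) = Fz_SP fz zh tp"
    "feas_var A fx fz bx' bz' tp'"
  then show "J_SP fx fz bx bz tp \<le> J_SP fx fz bx' bz' tp'"
    by (blast intro: J_SP_minimal_if_F_SP_minimal F_SP_eq_J_SP_if_attained)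
next
  fix bx bz tp xb zb txb tpb
  assume "feas_var A fx fz bx bz tp" "feas_star A xb zb txb tpb"
    "\<forall>bx' bz' tp'. feas_var A fx fz bx' bz' tp' \<longrightarrow> J_SP fx fz bx bz tp \<le> J_SP fx fz bx' bz' tp'"
  then show "F_SP fx fz (mean_vec bx) (mean_vec bz) (var_vec bx) tp \<le> F_SP fx fz xb zb txb tpb"
    by (blast intro: F_SP_minimal_if_J_SP_minimal)
qed (auto simp: feas_var_def feas_star_def)

end
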